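(* Let $\alpha'\in (1/2, 1)$. For every $\varepsilon'\in (0, (1-\alpha')/3)$ there exist $\delta >0$ and $n_0'$ such that the following holds for all $n>n_0'$: every $n$-vertex graph $G$ with at least $\lfloor n^2/4\rfloor+1$ edges, minimum degree at least $(1-\delta)n/2$, and $b(G)<\alpha' n/2$ satisfies $$t(G) > (\alpha'(1-\alpha')-4\varepsilon')\frac{n^2}{4}.$$
   Context: Graphs are finite and simple. A book of size $b$ in a graph is an edge that lies in $b$ triangles; $b(G)$ denotes the maximum size of a book in $G$, i.e. the maximum, over all edges $e$ of $G$, of the number of triangles of $G$ containing $e$. $t(G)$ denotes the number of triangles in $G$. *)

theory Defs
  imports Complex_Main
begin

definition simple_graph :: "'a set \<Rightarrow> 'a set set \<Rightarrow> bool" where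
  "simple_graph V E \<longleftrightarrow> finite V \<and> (\<forall>e\<in>E. e \<subseteq> V \<and> card e = 2)"

definition degree :: "'a set set \<Rightarrow> 'a \<Rightarrow> nat" where
  "degree E v = card {u. {u, v} \<in> E}"

definition triangles :: "'a set \<Rightarrow> 'a set set \<Rightarrow> 'a set set" where
  "triangles V E = {T. T \<subseteq> V \<and> card T = 3 \<and> (\<forall>x\<in>T. \<forall>y\<in>T. x \<noteq> y \<longrightarrow> {x, y} \<in> E)}"

definition num_triangles :: "'a set \<Rightarrow> 'a set set \<Rightarrow> nat" where
  "num_triangles V E = card (triangles V E)"

definition book_size :: "'a set \<Rightarrow> 'a set set \<Rightarrow> 'a set \<Rightarrow> nat" where
  "book_size V E e = card {T \<in> triangles V E. e \<subseteq> T}"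

definition max_book :: "'a set \<Rightarrow> 'a set set \<Rightarrow> nat" where
  "max_book V E = (if E = {} then 0 else Max (book_size V E ` E))"

end

theory Submission
  imports Defs
begin

text \<open>If \<open>t(G)\<close> were small, some vertex \<open>w\<close> would span few edges inside its
  neighbourhood, so by the minimum degree the cut \<open>(N(w), V - N(w))\<close>, and hence a maximum
  cut \<open>(S, V - S)\<close>, has almost \<open>n\<^sup>2/4\<close> edges: the maximum cut is nearly balanced and
  nearly complete bipartite. As \<open>e(G) > n\<^sup>2/4\<close>, some side, say \<open>S\<close>, contains an edge
  \<open>xy\<close>, where \<open>y\<close> misses at least as many vertices across as \<open>x\<close>; the small book on
  \<open>xy\<close> bounds the number \<open>q\<close> of neighbours of \<open>y\<close> across, and maximality of the cut
  gives \<open>y\<close> at most \<open>q\<close> neighbours in \<open>S\<close>. If \<open>q \<le> (\<alpha>' + \<epsilon>') n / 2\<close>, the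
  edges from the neighbours of \<open>y\<close> in \<open>S\<close> to those across close too many triangles
  through \<open>y\<close>. Otherwise the small books on the edges \<open>zy\<close>, \<open>z \<in> S\<close>, force each such
  \<open>z\<close> to miss about \<open>\<epsilon>' n / 2\<close> vertices across, contradicting near-completeness.\<close>

section \<open>Neighbourhoods and cuts\<close>

definition neighbours :: "'a set set \<Rightarrow> 'a \<Rightarrow> 'a set" where
  "neighbours E u = {v. {u, v} \<in> E}"

lemma neighbours_subset: "simple_graph V E \<Longrightarrow> neighbours E u \<subseteq> V"
  unfolding simple_graph_def neighbours_def by blast

lemma finite_neighbours: "simple_graph V E \<Longrightarrow> finite (neighbours E u)"
  using neighbours_subset simple_graph_def finite_subset by metis

lemma not_in_neighbours: "simple_graph V E \<Longrightarrow> u \<notin> neighbours E u"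
  unfolding simple_graph_def neighbours_def by fastforce

lemma in_neighbours_commute: "v \<in> neighbours E u \<longleftrightarrow> u \<in> neighbours E v"
  unfolding neighbours_def by (simp add: insert_commute)

lemma simple_graph_finite: "simple_graph V E \<Longrightarrow> finite V"
  unfolding simple_graph_def by simp

lemma finite_edges: "simple_graph V E \<Longrightarrow> finite E"
  unfolding simple_graph_def by (meson Pow_iff finite_Pow_iff finite_subset subsetI)

lemma degree_eq_card_neighbours: "degree E u = card (neighbours E u)"
  unfolding degree_def neighbours_def by (simp add: insert_commute)

lemma card_Int_eq_sum_of_bool: "finite Y \<Longrightarrow> card (A \<inter> Y) = (\<Sum>v\<in>Y. of_bool (v \<in> A))"
  by (simp add: Int_commute)

lemma sum_card_neighbours_Int_swap:
  assumes "finite X" "finite Y"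
  shows "(\<Sum>u\<in>X. card (neighbours E u \<inter> Y)) = (\<Sum>v\<in>Y. card (neighbours E v \<inter> X))"
proof -
  have "(\<Sum>u\<in>X. card (neighbours E u \<inter> Y)) = (\<Sum>u\<in>X. \<Sum>v\<in>Y. of_bool (v \<in> neighbours E u))"
    using assms by (simp only: card_Int_eq_sum_of_bool)
  also have "\<dots> = (\<Sum>v\<in>Y. \<Sum>u\<in>X. of_bool (u \<in> neighbours E v))"
    by (subst sum.swap) (simp only: in_neighbours_commute)
  also have "\<dots> = (\<Sum>v\<in>Y. card (neighbours E v \<inter> X))"
    using assms by (simp only: card_Int_eq_sum_of_bool)
  finally show ?thesis .
qed

definition cut_size :: "'a set set \<Rightarrow> 'a set \<Rightarrow> nat" where
  "cut_size E X = (\<Sum>u\<in>X. card (neighbours E u - X))"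

lemma cut_size_eq:
  "simple_graph V E \<Longrightarrow> cut_size E X = (\<Sum>u\<in>X. card (neighbours E u \<inter> (V - X)))"
  unfolding cut_size_def
  by (intro sum.cong refl arg_cong[where f = card]) (use neighbours_subset[of V E] in blast)

lemma cut_size_complement:
  assumes G: "simple_graph V E" and X: "X \<subseteq> V"
  shows "cut_size E (V - X) = cut_size E X"
proof -
  have "finite V" using simple_graph_finite[OF G] .
  moreover have "V - (V - X) = X" using X by auto
  ultimately show ?thesis
    using sum_card_neighbours_Int_swap[of "V - X" X E] X
    by (simp add: cut_size_eq[OF G] finite_subset)
qed

lemma cut_size_Diff_singleton:
  assumes G: "simple_graph V E" and "finite X" "y \<in> X"
  shows "cut_size E (X - {y}) + card (neighbours E y - X)
       = cut_size E X + card (neighbours E y \<inter> X)"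
proof -
  have step: "card (neighbours E u - (X - {y}))
      = card (neighbours E u - X) + of_bool (y \<in> neighbours E u)" for u
  proof (cases "y \<in> neighbours E u")
    case True
    then have "neighbours E u - (X - {y}) = insert y (neighbours E u - X)" using \<open>y \<in> X\<close> by auto
    then show ?thesis using True \<open>y \<in> X\<close> finite_neighbours[OF G, of u] by simp
  next
    case False
    then have "neighbours E u - (X - {y}) = neighbours E u - X" by auto
    then show ?thesis using False by simp
  qed
  have "cut_size E (X - {y})
      = (\<Sum>u\<in>X - {y}. card (neighbours E u - X)) + (\<Sum>u\<in>X - {y}. of_bool (y \<in> neighbours E u))"
    unfolding cut_size_def by (simp add: step sum.distrib)
  also have "(\<Sum>u\<in>X - {y}. of_bool (y \<in> neighbours E u)) = card (neighbours E y \<inter> (X - {y}))"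
    using \<open>finite X\<close> by (simp add: card_Int_eq_sum_of_bool in_neighbours_commute[of y])
  also have "neighbours E y \<inter> (X - {y}) = neighbours E y \<inter> X"
    using not_in_neighbours[OF G] by auto
  finally show ?thesis
    unfolding cut_size_def using assms(2,3) by (simp add: sum.remove)
qed

lemma max_cut_exists:
  assumes "simple_graph V E"
  obtains S where "S \<subseteq> V" "\<And>X. X \<subseteq> V \<Longrightarrow> cut_size E X \<le> cut_size E S"
proof -
  have fin: "finite (cut_size E ` Pow V)" using assms simple_graph_def by auto
  then have "Max (cut_size E ` Pow V) \<in> cut_size E ` Pow V" by (rule Max_in) auto
  then obtain S where S: "S \<in> Pow V" "cut_size E S = Max (cut_size E ` Pow V)" by auto
  show thesis
  proof (rule that)
    show "S \<subseteq> V" using S by simp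
    show "cut_size E X \<le> cut_size E S" if "X \<subseteq> V" for X using S fin that by simp
  qed
qed

lemma max_cut_locally_optimal:
  assumes G: "simple_graph V E" and S: "S \<subseteq> V"
    and max: "\<And>X. X \<subseteq> V \<Longrightarrow> cut_size E X \<le> cut_size E S" and "u \<in> S"
  shows "card (neighbours E u \<inter> S) \<le> card (neighbours E u \<inter> (V - S))"
proof -
  have "finite S" using finite_subset[OF S simple_graph_finite[OF G]] .
  have "neighbours E u - S = neighbours E u \<inter> (V - S)"
    using neighbours_subset[OF G] by blast
  then have "cut_size E (S - {u}) + card (neighbours E u \<inter> (V - S))
      = cut_size E S + card (neighbours E u \<inter> S)"
    using cut_size_Diff_singleton[OF G \<open>finite S\<close> \<open>u \<in> S\<close>] by (simp only:)
  moreover have "cut_size E (S - {u}) \<le> cut_size E S" using S by (intro max) blast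
  ultimately show ?thesis by linarith
qed

lemma sum_card_non_neighbours_add_cut_size:
  assumes G: "simple_graph V E"
  shows "(\<Sum>u\<in>S. card ((V - S) - neighbours E u)) + cut_size E S = card S * card (V - S)"
proof -
  have "finite (V - S)" using simple_graph_finite[OF G] by simp
  then have split: "card ((V - S) - neighbours E u) + card (neighbours E u \<inter> (V - S)) = card (V - S)"
    for u using card_Int_Diff[of "V - S" "neighbours E u"] by (simp add: Int_commute)
  have "(\<Sum>u\<in>S. card ((V - S) - neighbours E u)) + cut_size E S
      = (\<Sum>u\<in>S. card ((V - S) - neighbours E u) + card (neighbours E u \<inter> (V - S)))"
    by (simp only: cut_size_eq[OF G] sum.distrib)
  also have "\<dots> = card S * card (V - S)" by (simp only: split sum_constant of_nat_id)
  finally show ?thesis .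
qed

lemma exists_edge_inside_side:
  assumes G: "simple_graph V E" and S: "S \<subseteq> V" and "cut_size E S < card E"
  obtains x y where "{x, y} \<in> E" "x \<in> S \<and> y \<in> S \<or> x \<in> V - S \<and> y \<in> V - S"
proof (rule ccontr)
  assume no_inner_edge: "\<not> thesis"
  let ?Q = "SIGMA u:S. neighbours E u - S"
  have "finite V" using simple_graph_finite[OF G] .
  then have "finite S" using S finite_subset by blast
  then have finQ: "finite ?Q" and cardQ: "card ?Q = cut_size E S"
    unfolding cut_size_def using finite_neighbours[OF G] by (auto intro: card_SigmaI)
  have "E \<subseteq> (\<lambda>(u, v). {u, v}) ` ?Q"
  proof
    fix e assume "e \<in> E"
    then obtain u v where e: "e = {u, v}" "u \<in> V" "v \<in> V"
      using G unfolding simple_graph_def by (metis card_2_iff subset_iff insertI1 insertI2)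
    then have "{u, v} \<in> E" "{v, u} \<in> E" using \<open>e \<in> E\<close> by (auto simp: insert_commute)
    then have "(u, v) \<in> ?Q \<or> (v, u) \<in> ?Q"
      using no_inner_edge that e unfolding neighbours_def by blast
    then show "e \<in> (\<lambda>(u, v). {u, v}) ` ?Q" using e by (force simp: insert_commute)
  qed
  then have "card E \<le> card ?Q" using finQ by (meson card_image_le card_mono finite_imageI le_trans)
  then show False using cardQ \<open>cut_size E S < card E\<close> by simp
qed

lemma mult_diff_le_quarter:
  assumes "k \<le> (n::nat)"
  shows "k * (n - k) \<le> n\<^sup>2 div 4"
proof -
  have "real n ^ 2 - 4 * (real k * (real n - real k)) = (real n - 2 * real k)\<^sup>2"
    by (simp add: power2_eq_square algebra_simps)
  then have "4 * (real k * (real n - real k)) \<le> real n ^ 2"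
    using zero_le_power2[of "real n - 2 * real k"] by linarith
  moreover have "real (4 * (k * (n - k))) = 4 * (real k * (real n - real k))"
    using assms by simp
  ultimately have "4 * (k * (n - k)) \<le> n\<^sup>2"
    by (metis of_nat_le_iff of_nat_power)
  then show ?thesis by (simp add: less_eq_div_iff_mult_less_eq mult.commute)
qed

lemma max_cut_with_inner_edge_exists:
  assumes G: "simple_graph V E" and many_edges: "card V ^ 2 div 4 < card E"
  obtains S x y where "S \<subseteq> V" "\<And>X. X \<subseteq> V \<Longrightarrow> cut_size E X \<le> cut_size E S"
    "{x, y} \<in> E" "x \<in> S" "y \<in> S"
proof -
  obtain A where A: "A \<subseteq> V" and max: "\<And>X. X \<subseteq> V \<Longrightarrow> cut_size E X \<le> cut_size E A"
    using max_cut_exists[OF G] by blast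
  have "finite V" using simple_graph_finite[OF G] .
  then have "card (V - A) = card V - card A" "card A \<le> card V"
    using A by (auto simp: card_Diff_subset finite_subset card_mono)
  then have "cut_size E A \<le> card V ^ 2 div 4"
    using sum_card_non_neighbours_add_cut_size[OF G, of A] mult_diff_le_quarter[of "card A" "card V"]
    by simp
  then have "cut_size E A < card E" using many_edges by linarith
  then obtain x y where xy: "{x, y} \<in> E" and sides: "x \<in> A \<and> y \<in> A \<or> x \<in> V - A \<and> y \<in> V - A"
    using exists_edge_inside_side[OF G A] by blast
  show thesis
  proof (cases "x \<in> A \<and> y \<in> A")
    case True
    then show thesis using that[OF A max xy] by blast
  next
    case False
    then have "x \<in> V - A" "y \<in> V - A" using sides by auto
    moreover have "cut_size E X \<le> cut_size E (V - A)" if "X \<subseteq> V" for X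
      using max[OF that] cut_size_complement[OF G A] by simp
    ultimately show thesis using that[of "V - A", OF _ _ xy] by blast
  qed
qed

section \<open>Triangles and books\<close>

lemma triangle_in_triangles:
  assumes G: "simple_graph V E" and "{x, y} \<in> E" "{y, z} \<in> E" "{x, z} \<in> E"
  shows "{x, y, z} \<in> triangles V E"
proof -
  have "x \<noteq> y" "y \<noteq> z" "x \<noteq> z" "{x, y, z} \<subseteq> V"
    using assms unfolding simple_graph_def by (fastforce dest: bspec)+
  then show ?thesis using assms(2-4) unfolding triangles_def by (auto simp: insert_commute)
qed

lemma finite_triangles: "simple_graph V E \<Longrightarrow> finite (triangles V E)"
  unfolding triangles_def simple_graph_def by (rule finite_subset[of _ "Pow V"]) auto

lemma card_common_neighbours_le_max_book:
  assumes G: "simple_graph V E" and e: "{x, y} \<in> E"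
  shows "card (neighbours E x \<inter> neighbours E y) \<le> max_book V E"
proof -
  have "inj_on (\<lambda>z. {x, y, z}) (neighbours E x \<inter> neighbours E y)"
  proof (rule inj_onI)
    fix a b assume "a \<in> neighbours E x \<inter> neighbours E y" "b \<in> neighbours E x \<inter> neighbours E y"
      and "{x, y, a} = {x, y, b}"
    moreover have "a \<notin> {x, y}" "b \<notin> {x, y}"
      using calculation(1,2) not_in_neighbours[OF G] in_neighbours_commute by auto
    ultimately show "a = b" by blast
  qed
  moreover have "(\<lambda>z. {x, y, z}) ` (neighbours E x \<inter> neighbours E y) \<subseteq> {T \<in> triangles V E. {x, y} \<subseteq> T}"
    using triangle_in_triangles[OF G e] unfolding neighbours_def by auto
  ultimately have "card (neighbours E x \<inter> neighbours E y) \<le> book_size V E {x, y}"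
    unfolding book_size_def using finite_triangles[OF G] by (intro card_inj_on_le) auto
  also have "\<dots> \<le> max_book V E"
    unfolding max_book_def using e finite_edges[OF G] by auto
  finally show ?thesis .
qed

lemma sum_card_common_neighbours_le_triangles:
  assumes G: "simple_graph V E"
  shows "(\<Sum>w\<in>V. \<Sum>u\<in>neighbours E w. card (neighbours E u \<inter> neighbours E w))
       \<le> 27 * num_triangles V E"
proof -
  let ?Q = "SIGMA w:V. SIGMA u:neighbours E w. neighbours E u \<inter> neighbours E w"
  have finV: "finite V" using simple_graph_finite[OF G] .
  have "(\<Sum>w\<in>V. \<Sum>u\<in>neighbours E w. card (neighbours E u \<inter> neighbours E w)) = card ?Q"
    using finV finite_neighbours[OF G] by simp
  also have "\<dots> \<le> card (\<Union>T\<in>triangles V E. T \<times> T \<times> T)"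
  proof (rule card_mono)
    show "finite (\<Union>T\<in>triangles V E. T \<times> T \<times> T)"
      using finite_triangles[OF G] finV by (auto simp: triangles_def intro: finite_subset)
    show "?Q \<subseteq> (\<Union>T\<in>triangles V E. T \<times> T \<times> T)"
    proof
      fix q assume "q \<in> ?Q"
      then obtain w u z where q: "q = (w, u, z)" and
        "u \<in> neighbours E w" "z \<in> neighbours E u" "z \<in> neighbours E w"
        by auto
      then have "{w, u, z} \<in> triangles V E"
        unfolding neighbours_def by (intro triangle_in_triangles[OF G]) auto
      then show "q \<in> (\<Union>T\<in>triangles V E. T \<times> T \<times> T)" using q by blast
    qed
  qed
  also have "\<dots> \<le> (\<Sum>T\<in>triangles V E. card (T \<times> T \<times> T))"
    by (rule card_UN_le[OF finite_triangles[OF G]])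
  also have "\<dots> = 27 * num_triangles V E"
    unfolding num_triangles_def by (simp add: triangles_def card_cartesian_product)
  finally show ?thesis .
qed

lemma exists_vertex_neighbourhood_large_cut:
  assumes G: "simple_graph V E" and "V \<noteq> {}"
    and "0 \<le> c" and min_degree: "\<And>v. v \<in> V \<Longrightarrow> c \<le> real (degree E v)"
  obtains w where "w \<in> V"
    "c\<^sup>2 - 27 * real (num_triangles V E) / real (card V) \<le> real (cut_size E (neighbours E w))"
proof -
  define P where "P w = (\<Sum>u\<in>neighbours E w. card (neighbours E u \<inter> neighbours E w))" for w
  have finV: "finite V" using simple_graph_finite[OF G] .
  have "\<exists>w\<in>V. card V * P w \<le> 27 * num_triangles V E"
  proof (rule ccontr)
    assume "\<not> ?thesis"
    then have "(\<Sum>w\<in>V. 27 * num_triangles V E) < (\<Sum>w\<in>V. card V * P w)"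
      using finV \<open>V \<noteq> {}\<close> by (intro sum_strict_mono) auto
    also have "\<dots> = card V * (\<Sum>w\<in>V. P w)" by (rule sum_distrib_left[symmetric])
    also have "\<dots> \<le> card V * (27 * num_triangles V E)"
      using sum_card_common_neighbours_le_triangles[OF G] unfolding P_def by (rule mult_le_mono2)
    finally show False by simp
  qed
  then obtain w where w: "w \<in> V" and Pw: "real (card V) * real (P w) \<le> 27 * real (num_triangles V E)"
    by (metis of_nat_le_iff of_nat_mult of_nat_numeral)
  have "cut_size E X + (\<Sum>u\<in>X. card (neighbours E u \<inter> X)) = (\<Sum>u\<in>X. degree E u)" for X
    unfolding cut_size_def degree_eq_card_neighbours sum.distrib[symmetric]
    using card_Int_Diff[OF finite_neighbours[OF G]] by (intro sum.cong refl) (metis add.commute)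
  then have "real (cut_size E (neighbours E w)) + real (P w) = (\<Sum>u\<in>neighbours E w. real (degree E u))"
    unfolding P_def by (metis of_nat_add of_nat_sum)
  moreover have "real (card (neighbours E w)) * c \<le> (\<Sum>u\<in>neighbours E w. real (degree E u))"
    using min_degree neighbours_subset[OF G] by (intro sum_bounded_below) blast
  moreover have "real (card (neighbours E w)) * c \<ge> c\<^sup>2"
    using min_degree[OF w] \<open>0 \<le> c\<close> by (simp add: degree_eq_card_neighbours power2_eq_square mult_right_mono)
  moreover have "real (P w) \<le> 27 * real (num_triangles V E) / real (card V)"
    using Pw \<open>V \<noteq> {}\<close> finV by (simp add: field_simps card_gt_0_iff)
  ultimately show ?thesis using that[OF w] by linarith
qed

lemma sum_card_common_neighbours_across_le_triangles:
  assumes G: "simple_graph V E" and "y \<in> S"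
  shows "(\<Sum>x\<in>neighbours E y \<inter> S. card (neighbours E x \<inter> neighbours E y \<inter> (V - S)))
       \<le> num_triangles V E"
proof -
  let ?Q = "SIGMA x:neighbours E y \<inter> S. neighbours E x \<inter> neighbours E y \<inter> (V - S)"
  have "inj_on (\<lambda>(x, z). {y, x, z}) ?Q"
  proof (rule inj_onI)
    fix p q assume "p \<in> ?Q" "q \<in> ?Q" "(\<lambda>(x, z). {y, x, z}) p = (\<lambda>(x, z). {y, x, z}) q"
    then obtain x z x' z' where pq: "p = (x, z)" "q = (x', z')"
      and "(x, z) \<in> ?Q" "(x', z') \<in> ?Q" and eq: "{y, x, z} = {y, x', z'}"
      by (cases p, cases q) auto
    then have "x \<in> S" "x' \<in> S" "z \<notin> S" "z' \<notin> S" "x \<noteq> y" "x' \<noteq> y"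
      using not_in_neighbours[OF G, of y] by auto
    moreover have "z \<in> {y, x', z'}" "x \<in> {y, x', z'}" using eq by blast+
    ultimately show "p = q" using \<open>y \<in> S\<close> pq by blast
  qed
  moreover have "(\<lambda>(x, z). {y, x, z}) ` ?Q \<subseteq> triangles V E"
    unfolding neighbours_def by (auto intro: triangle_in_triangles[OF G])
  ultimately have "card ?Q \<le> num_triangles V E"
    unfolding num_triangles_def using finite_triangles[OF G] by (intro card_inj_on_le) auto
  then show ?thesis using finite_neighbours[OF G] by simp
qed

lemma card_Int_le_card_Int_add_card_Diff:
  "finite T \<Longrightarrow> card (T \<inter> A) \<le> card (B \<inter> A \<inter> T) + card (T - B)"
  by (rule order_trans[OF card_mono card_Un_le]) auto

lemma card_cross_neighbours_le_max_book_add: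
  assumes G: "simple_graph V E" and "{z, y} \<in> E"
  shows "card (neighbours E y \<inter> (V - S)) \<le> max_book V E + card ((V - S) - neighbours E z)"
proof -
  have "finite (V - S)" using simple_graph_finite[OF G] by simp
  then have "card (neighbours E y \<inter> (V - S))
      \<le> card (neighbours E z \<inter> neighbours E y \<inter> (V - S)) + card ((V - S) - neighbours E z)"
    using card_Int_le_card_Int_add_card_Diff[of "V - S" "neighbours E y" "neighbours E z"]
    by (simp add: Int_commute)
  moreover have "card (neighbours E z \<inter> neighbours E y \<inter> (V - S)) \<le> max_book V E"
    using card_common_neighbours_le_max_book[OF G \<open>{z, y} \<in> E\<close>] finite_neighbours[OF G]
    by (meson Int_lower1 card_mono finite_Int le_trans)
  ultimately show ?thesis by linarith
qed

lemma card_cross_neighbours_le_half: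
  assumes G: "simple_graph V E" and "{x, y} \<in> E"
    and "card ((V - S) - neighbours E x) \<le> card ((V - S) - neighbours E y)"
  shows "2 * card (neighbours E y \<inter> (V - S)) \<le> max_book V E + card (V - S)"
proof -
  have "finite (V - S)" using simple_graph_finite[OF G] by simp
  then have "card (neighbours E y \<inter> (V - S)) + card ((V - S) - neighbours E y) = card (V - S)"
    using card_Int_Diff[of "V - S" "neighbours E y"] by (simp add: Int_commute)
  then show ?thesis using card_cross_neighbours_le_max_book_add[OF G \<open>{x, y} \<in> E\<close>, of S] assms(3)
    by linarith
qed

lemma degree_eq_card_Int_add_card_Int:
  "simple_graph V E \<Longrightarrow> degree E y = card (neighbours E y \<inter> S) + card (neighbours E y \<inter> (V - S))"
  using card_Int_Diff[OF finite_neighbours, of V E y S] neighbours_subset[of V E y]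
  by (simp add: degree_eq_card_neighbours Diff_eq Int_assoc[symmetric] Int_absorb2)

lemma cross_triangles_lower_bound:
  assumes G: "simple_graph V E" and S: "S \<subseteq> V" and "y \<in> S"
  shows "real (card (neighbours E y \<inter> S)) * real (card (neighbours E y \<inter> (V - S)))
         - (\<Sum>u\<in>S. real (card ((V - S) - neighbours E u)))
       \<le> real (num_triangles V E)"
proof -
  let ?Y = "neighbours E y \<inter> S" and ?q = "card (neighbours E y \<inter> (V - S))"
  have finV: "finite V" using simple_graph_finite[OF G] .
  then have "finite S" using S finite_subset by blast
  have "real ?q - real (card ((V - S) - neighbours E z))
      \<le> real (card (neighbours E z \<inter> neighbours E y \<inter> (V - S)))" for z
    using card_Int_le_card_Int_add_card_Diff[of "V - S" "neighbours E y" "neighbours E z"] finV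
    by (simp add: Int_commute)
  then have "(\<Sum>z\<in>?Y. real ?q - real (card ((V - S) - neighbours E z)))
      \<le> real (\<Sum>z\<in>?Y. card (neighbours E z \<inter> neighbours E y \<inter> (V - S)))"
    unfolding of_nat_sum by (rule sum_mono)
  also have "\<dots> \<le> real (num_triangles V E)"
    using sum_card_common_neighbours_across_le_triangles[OF G \<open>y \<in> S\<close>] by linarith
  finally have "real (card ?Y) * real ?q - (\<Sum>z\<in>?Y. real (card ((V - S) - neighbours E z)))
      \<le> real (num_triangles V E)"
    by (simp add: sum_subtractf)
  moreover have "(\<Sum>z\<in>?Y. real (card ((V - S) - neighbours E z)))
      \<le> (\<Sum>u\<in>S. real (card ((V - S) - neighbours E u)))"
    using \<open>finite S\<close> by (intro sum_mono2) auto
  ultimately show ?thesis by linarith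
qed

lemma non_neighbours_across_lower_bound:
  assumes G: "simple_graph V E" and S: "S \<subseteq> V"
  shows "real (card (neighbours E y \<inter> S))
           * (real (card (neighbours E y \<inter> (V - S))) - real (max_book V E))
       \<le> (\<Sum>u\<in>S. real (card ((V - S) - neighbours E u)))"
proof -
  let ?Y = "neighbours E y \<inter> S"
  have "finite S" using finite_subset[OF S simple_graph_finite[OF G]] .
  have "real (card (neighbours E y \<inter> (V - S))) - real (max_book V E)
      \<le> real (card ((V - S) - neighbours E z))" if "z \<in> ?Y" for z
  proof -
    have "{z, y} \<in> E" using that unfolding neighbours_def by (simp add: insert_commute)
    from card_cross_neighbours_le_max_book_add[OF G this, of S] show ?thesis by linarith
  qed
  then have "real (card ?Y) * (real (card (neighbours E y \<inter> (V - S))) - real (max_book V E))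
      \<le> (\<Sum>z\<in>?Y. real (card ((V - S) - neighbours E z)))"
    using sum_bounded_below[of ?Y] by (metis (no_types, lifting))
  also have "\<dots> \<le> (\<Sum>u\<in>S. real (card ((V - S) - neighbours E u)))"
    using \<open>finite S\<close> by (intro sum_mono2) auto
  finally show ?thesis .
qed

section \<open>Numerical estimates\<close>

lemma many_triangles_if_cross_degree_small:
  fixes a e \<delta> N q r t M :: real
  assumes a: "1/2 < a" "a < 1" and e: "0 < e" "e < (1 - a) / 3"
    and \<delta>: "0 \<le> \<delta>" "\<delta> \<le> e / 4" and N: "16 \<le> e * N"
    and r: "r \<le> q" "(1 - \<delta>) * N / 2 \<le> q + r" and q: "q \<le> (a + e) * N / 2"
    and t: "r * q - M \<le> t" and M: "M \<le> \<delta> * N\<^sup>2 / 2 + 2 * N"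
  shows "(a * (1 - a) - 4 * e) * N\<^sup>2 / 4 < t"
proof -
  have e3: "3 * e < 1 - a" and \<delta>4: "4 * \<delta> \<le> e" using e \<delta> by (simp_all add: field_simps)
  define c where "c = (1 - \<delta>) * N / 2"
  define B where "B = (a + e) * N / 2"
  define X where "X = N\<^sup>2"
  define A where "A = a * (1 - a) * X"
  have "0 < N" using N e mult_nonneg_nonpos[of e N] by linarith
  have "0 \<le> c - B"
  proof -
    have "c - B = (1 - \<delta> - a - e) * N / 2" unfolding c_def B_def by algebra
    moreover have "0 \<le> (1 - \<delta> - a - e) * N" using e3 \<delta>4 e \<open>0 < N\<close> by simp
    ultimately show ?thesis by linarith
  qed
  have "\<delta> \<le> 1" using \<delta>4 e3 a by linarith
  then have "0 \<le> c" unfolding c_def using \<open>0 < N\<close> by simp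
  then have "0 \<le> q" using r unfolding c_def by linarith
  have "(c - q) * q \<le> r * q" using r \<open>0 \<le> q\<close> unfolding c_def by (intro mult_right_mono) auto
  moreover have "(c - B) * B \<le> (c - q) * q"
  proof -
    have "(c - q) * q - (c - B) * B = (B - q) * (q + B - c)" by algebra
    moreover have "0 \<le> B - q" "0 \<le> q + B - c" using q r \<open>0 \<le> c - B\<close> unfolding B_def c_def by linarith+
    ultimately show ?thesis by (metis diff_ge_0_iff_ge mult_nonneg_nonneg)
  qed
  moreover have "(c - B) * (a * N / 2) \<le> (c - B) * B"
    using \<open>0 \<le> c - B\<close> e \<open>0 < N\<close> unfolding B_def by (intro mult_left_mono) (auto simp: field_simps)
  ultimately have "(c - B) * (a * N / 2) - M \<le> t" using t by linarith
  moreover have "(c - B) * (a * N / 2) = A / 4 - (a * \<delta>) * X / 4 - (a * e) * X / 4"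
    unfolding c_def B_def A_def X_def by (simp add: power2_eq_square field_simps)
  moreover have "(a * \<delta>) * X \<le> \<delta> * X" "(a * e) * X \<le> e * X"
    using a \<delta> e unfolding X_def by (auto intro!: mult_right_mono mult_left_le_one_le)
  moreover have "(4 * \<delta>) * X \<le> e * X" using \<delta>4 unfolding X_def by (rule mult_right_mono) simp
  moreover have "16 * N \<le> e * X"
    using mult_right_mono[OF N, of N] \<open>0 < N\<close> unfolding X_def by (simp add: power2_eq_square mult.assoc)
  moreover have "0 < e * X" using e \<open>0 < N\<close> unfolding X_def by simp
  ultimately have "A / 4 - e * X < t"
    using M unfolding X_def[symmetric] by linarith
  moreover have "(a * (1 - a) - 4 * e) * N\<^sup>2 / 4 = A / 4 - e * X"
    unfolding A_def X_def by (simp add: field_simps)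
  ultimately show ?thesis by simp
qed

lemma many_non_neighbours_if_cross_degree_large:
  fixes a e \<delta> \<gamma> N q r b s M :: real
  assumes "a < 1" "0 < e" and \<delta>: "\<delta> \<le> (1 - a) * e / 32" and N: "64 \<le> (1 - a) * e * N"
    and r: "(1 - \<delta>) * N / 2 \<le> q + r" and q: "2 * q \<le> b + s" and b: "b \<le> a * N / 2"
    and s: "s \<le> N / 2 + \<gamma> * N" and small: "\<delta> + \<gamma> \<le> (1 - a) / 4"
    and q_large: "(a + e) * N / 2 < q" and M: "r * (q - b) \<le> M"
  shows "\<delta> * N\<^sup>2 / 2 + 2 * N < M"
proof -
  define Z where "Z = (1 - a) * e * N"
  have "0 < (1 - a) * e" using \<open>a < 1\<close> \<open>0 < e\<close> by simp
  then have "0 < N" using N mult_nonneg_nonpos[of "(1 - a) * e" N] by linarith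
  have "(\<delta> + \<gamma>) * N \<le> (1 - a) / 4 * N" using small \<open>0 < N\<close> by (intro mult_right_mono) auto
  then have "(1 - a) * N / 8 \<le> r" using r q b s by (simp add: algebra_simps)
  moreover have "e * N / 2 \<le> q - b" using q_large b by (simp add: algebra_simps)
  moreover have "0 \<le> (1 - a) * N / 8" using \<open>a < 1\<close> \<open>0 < N\<close> by simp
  ultimately have "(1 - a) * N / 8 * (e * N / 2) \<le> r * (q - b)"
    using \<open>0 < e\<close> \<open>0 < N\<close> by (intro mult_mono') auto
  moreover have "(1 - a) * N / 8 * (e * N / 2) = Z * N / 16" unfolding Z_def by simp
  moreover have "\<delta> * N\<^sup>2 \<le> Z * N / 32"
    using mult_right_mono[OF \<delta>, of "N\<^sup>2"] unfolding Z_def by (simp add: power2_eq_square)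
  moreover have "64 * N \<le> Z * N" using mult_right_mono[OF N, of N] \<open>0 < N\<close> unfolding Z_def by simp
  moreover have "0 < Z * N" using \<open>0 < (1 - a) * e\<close> \<open>0 < N\<close> unfolding Z_def by simp
  ultimately show ?thesis using M by linarith
qed

lemma many_triangles_from_max_cut_estimates:
  fixes a e \<delta> \<gamma> N q r b s t M :: real
  assumes a: "1/2 < a" "a < 1" and e: "0 < e" "e < (1 - a) / 3"
    and \<delta>: "0 \<le> \<delta>" "\<delta> \<le> (1 - a) * e / 32" "\<delta> + \<gamma> \<le> (1 - a) / 4"
    and N: "64 \<le> (1 - a) * e * N"
    and r: "r \<le> q" "(1 - \<delta>) * N / 2 \<le> q + r" and q: "2 * q \<le> b + s"
    and b: "b \<le> a * N / 2" and s: "s \<le> N / 2 + \<gamma> * N"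
    and t: "r * q - M \<le> t" and M: "r * (q - b) \<le> M" "M \<le> \<delta> * N\<^sup>2 / 2 + 2 * N"
  shows "(a * (1 - a) - 4 * e) * N\<^sup>2 / 4 < t"
proof (cases "q \<le> (a + e) * N / 2")
  case True
  have "0 < (1 - a) * e" using a e by simp
  then have "0 < N" using N mult_nonneg_nonpos[of "(1 - a) * e" N] by linarith
  have "(1 - a) * e \<le> e" using a e by (simp add: mult_le_cancel_right1)
  moreover have "(1 - a) * e * N \<le> e * N" using calculation \<open>0 < N\<close> by (intro mult_right_mono) auto
  ultimately have "\<delta> \<le> e / 4" "16 \<le> e * N" using \<delta>(2) N e by linarith+
  then show ?thesis using many_triangles_if_cross_degree_small[OF a e \<delta>(1) _ _ r True t M(2)] by simp
next
  case False
  then show ?thesis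
    using many_non_neighbours_if_cross_degree_large[OF a(2) e(1) \<delta>(2) N r(2) q b s \<delta>(3) _ M(1)] M(2)
    by simp
qed

lemma few_triangles_cut_deficit_le:
  fixes a e \<delta> N t :: real
  assumes "0 < N" "0 < e" and t: "t \<le> (a * (1 - a) - 4 * e) * N\<^sup>2 / 4"
  shows "N\<^sup>2 / 4 - ((1 - \<delta>) * N / 2)\<^sup>2 + 27 * t / N \<le> \<delta> * N\<^sup>2 / 2 + 2 * N"
proof -
  have "a * (1 - a) \<le> 1 / 4" using zero_le_power2[of "a - 1/2"] by (simp add: power2_eq_square algebra_simps)
  then have "(a * (1 - a) - 4 * e) * N\<^sup>2 \<le> 1 / 4 * N\<^sup>2" using \<open>0 < e\<close> by (intro mult_right_mono) auto
  then have "27 * t \<le> (2 * N) * N" using t zero_le_power2[of N] unfolding power2_eq_square by linarith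
  then have "27 * t / N \<le> 2 * N" using \<open>0 < N\<close> by (simp add: pos_divide_le_eq)
  moreover have "N\<^sup>2 / 4 - \<delta> * N\<^sup>2 / 2 \<le> ((1 - \<delta>) * N / 2)\<^sup>2"
    using zero_le_power2[of "\<delta> * N"] by (simp add: power2_eq_square field_simps)
  ultimately show ?thesis by linarith
qed

lemma few_books_delta_bounds:
  fixes a e :: real
  assumes a: "1/2 < a" "a < 1" and e: "0 < e" "e < (1 - a) / 3"
  defines "\<delta> \<equiv> ((1 - a) * e / 16)\<^sup>2"
  shows "0 < \<delta>" "\<delta> \<le> (1 - a) * e / 32" "\<delta> + sqrt \<delta> \<le> (1 - a) / 4"
proof -
  define g where "g = (1 - a) * e / 16"
  have a': "0 < 1 - a" "1 - a \<le> 1" and "e \<le> 1" using a e by (auto simp: field_simps)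
  have "(1 - a) * e \<le> 1 * 1" using a' \<open>e \<le> 1\<close> e by (intro mult_mono) auto
  moreover have "(1 - a) * e \<le> (1 - a) * 2" using a' \<open>e \<le> 1\<close> by (intro mult_left_mono) auto
  moreover have "0 < (1 - a) * e" using a' e by simp
  ultimately have "0 < g" "g \<le> 1 / 2" "2 * g \<le> (1 - a) / 4" "(1 - a) * e / 32 = g / 2"
    unfolding g_def by argo+
  moreover have "g\<^sup>2 \<le> g / 2" using calculation mult_right_mono[of g "1 / 2" g] by (simp add: power2_eq_square)
  moreover have "\<delta> = g\<^sup>2" "sqrt \<delta> = g" using \<open>0 < g\<close> unfolding \<delta>_def g_def by simp_all
  ultimately show "0 < \<delta>" "\<delta> \<le> (1 - a) * e / 32" "\<delta> + sqrt \<delta> \<le> (1 - a) / 4" by simp_all argo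
qed

section \<open>Nearly complete bipartite maximum cuts\<close>

lemma large_cut_nearly_complete_and_balanced:
  assumes G: "simple_graph V E" and S: "S \<subseteq> V"
    and large: "real (card V) ^ 2 / 4 - D \<le> real (cut_size E S)"
  shows "(\<Sum>u\<in>S. real (card ((V - S) - neighbours E u))) \<le> D"
    and "(real (card (V - S)) - real (card V) / 2)\<^sup>2 \<le> D"
proof -
  define k s where "k = real (card S)" and "s = real (card (V - S))"
  have "finite V" using simple_graph_finite[OF G] .
  then have "k + s = real (card V)"
    unfolding k_def s_def using S by (simp add: card_Diff_subset finite_subset card_mono)
  moreover have "k * s + (s - (k + s) / 2)\<^sup>2 = (k + s) ^ 2 / 4"
    by (simp add: power2_eq_square field_simps)
  ultimately have "k * s + (s - real (card V) / 2)\<^sup>2 = real (card V) ^ 2 / 4" by simp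
  moreover have "(\<Sum>u\<in>S. real (card ((V - S) - neighbours E u))) + real (cut_size E S) = k * s"
    using sum_card_non_neighbours_add_cut_size[OF G, of S] unfolding k_def s_def
    by (metis of_nat_add of_nat_mult of_nat_sum)
  moreover have "0 \<le> (\<Sum>u\<in>S. real (card ((V - S) - neighbours E u)))" by (simp add: sum_nonneg)
  ultimately show "(\<Sum>u\<in>S. real (card ((V - S) - neighbours E u))) \<le> D"
    and "(real (card (V - S)) - real (card V) / 2)\<^sup>2 \<le> D"
    using large unfolding s_def by (smt (verit) zero_le_power2)+
qed

lemma max_cut_nearly_complete_bipartite:
  assumes G: "simple_graph V E" and "V \<noteq> {}" and many_edges: "card V ^ 2 div 4 < card E"
    and "0 \<le> c" and min_degree: "\<And>v. v \<in> V \<Longrightarrow> c \<le> real (degree E v)"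
  defines "D \<equiv> real (card V) ^ 2 / 4 - c\<^sup>2 + 27 * real (num_triangles V E) / real (card V)"
  obtains S x y where "S \<subseteq> V" "\<And>X. X \<subseteq> V \<Longrightarrow> cut_size E X \<le> cut_size E S"
    "{x, y} \<in> E" "x \<in> S" "y \<in> S"
    "(\<Sum>u\<in>S. real (card ((V - S) - neighbours E u))) \<le> D"
    "(real (card (V - S)) - real (card V) / 2)\<^sup>2 \<le> D"
proof -
  obtain w where "c\<^sup>2 - 27 * real (num_triangles V E) / real (card V) \<le> real (cut_size E (neighbours E w))"
    using exists_vertex_neighbourhood_large_cut[OF G \<open>V \<noteq> {}\<close> \<open>0 \<le> c\<close> min_degree] by blast
  moreover obtain S x y where S: "S \<subseteq> V" and max: "\<And>X. X \<subseteq> V \<Longrightarrow> cut_size E X \<le> cut_size E S"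
    and "{x, y} \<in> E" "x \<in> S" "y \<in> S"
    using max_cut_with_inner_edge_exists[OF G many_edges] by blast
  moreover have "cut_size E (neighbours E w) \<le> cut_size E S" using max[OF neighbours_subset[OF G]] .
  ultimately have "real (card V) ^ 2 / 4 - D \<le> real (cut_size E S)" unfolding D_def by linarith
  then show thesis
    using that[OF S max \<open>{x, y} \<in> E\<close> \<open>x \<in> S\<close> \<open>y \<in> S\<close>] large_cut_nearly_complete_and_balanced[OF G S]
    by blast
qed

lemma max_cut_vertex_estimates:
  assumes G: "simple_graph V E" and S: "S \<subseteq> V"
    and max_cut: "\<And>X. X \<subseteq> V \<Longrightarrow> cut_size E X \<le> cut_size E S"
    and edge: "{x, y} \<in> E" and "y \<in> S"
    and fewer_missed: "card ((V - S) - neighbours E x) \<le> card ((V - S) - neighbours E y)"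
  defines "q \<equiv> real (card (neighbours E y \<inter> (V - S)))" and "r \<equiv> real (card (neighbours E y \<inter> S))"
    and "b \<equiv> real (max_book V E)" and "s \<equiv> real (card (V - S))"
    and "M \<equiv> \<Sum>u\<in>S. real (card ((V - S) - neighbours E u))"
  shows "r \<le> q" and "real (degree E y) = q + r" and "2 * q \<le> b + s"
    and "r * q - M \<le> real (num_triangles V E)" and "r * (q - b) \<le> M"
proof -
  show "r \<le> q" using max_cut_locally_optimal[OF G S max_cut \<open>y \<in> S\<close>] unfolding q_def r_def by simp
  show "real (degree E y) = q + r" unfolding q_def r_def degree_eq_card_Int_add_card_Int[OF G, of y S] by simp
  show "2 * q \<le> b + s" using card_cross_neighbours_le_half[OF G edge fewer_missed]
    unfolding q_def b_def s_def by linarith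
  show "r * q - M \<le> real (num_triangles V E)"
    using cross_triangles_lower_bound[OF G S \<open>y \<in> S\<close>] unfolding q_def r_def M_def .
  show "r * (q - b) \<le> M" using non_neighbours_across_lower_bound[OF G S, of y] unfolding q_def r_def b_def M_def .
qed

lemma many_triangles_if_few_books:
  fixes a e \<delta> :: real and V :: "'a set" and E :: "'a set set"
  assumes a: "1/2 < a" "a < 1" and e: "0 < e" "e < (1 - a) / 3"
    and \<delta>: "0 < \<delta>" "\<delta> \<le> (1 - a) * e / 32" "\<delta> + sqrt \<delta> \<le> (1 - a) / 4"
    and large: "4 \<le> \<delta> * real (card V)" "64 \<le> (1 - a) * e * real (card V)"
    and G: "simple_graph V E" and many_edges: "card V ^ 2 div 4 < card E"
    and min_degree: "\<forall>v\<in>V. (1 - \<delta>) * real (card V) / 2 \<le> real (degree E v)"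
    and few_books: "real (max_book V E) < a * real (card V) / 2"
  shows "(a * (1 - a) - 4 * e) * real (card V) ^ 2 / 4 < real (num_triangles V E)"
proof (rule ccontr)
  define N t c where "N = real (card V)" and "t = real (num_triangles V E)"
    and "c = (1 - \<delta>) * N / 2"
  assume "\<not> ?thesis"
  then have t_le: "t \<le> (a * (1 - a) - 4 * e) * N\<^sup>2 / 4" unfolding N_def t_def by simp
  have large_N: "4 \<le> \<delta> * N" "64 \<le> (1 - a) * e * N" using large unfolding N_def .
  then have "0 < N" using \<delta>(1) mult_nonneg_nonpos[of \<delta> N] by linarith
  have "0 \<le> sqrt \<delta>" using \<delta>(1) by simp
  then have "\<delta> \<le> 1" using \<delta>(3) a by argo
  then have "0 \<le> c" unfolding c_def using \<open>0 < N\<close> by simp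
  have D: "N\<^sup>2 / 4 - c\<^sup>2 + 27 * t / N \<le> \<delta> * N\<^sup>2 / 2 + 2 * N"
    using few_triangles_cut_deficit_le[OF \<open>0 < N\<close> e(1) t_le] unfolding c_def .
  have "V \<noteq> {}" using \<open>0 < N\<close> unfolding N_def by auto
  obtain S x0 y0 where S: "S \<subseteq> V" and max_cut: "\<And>X. X \<subseteq> V \<Longrightarrow> cut_size E X \<le> cut_size E S"
    and inner_edge: "{x0, y0} \<in> E" "x0 \<in> S" "y0 \<in> S"
    and complete: "(\<Sum>u\<in>S. real (card ((V - S) - neighbours E u))) \<le> N\<^sup>2 / 4 - c\<^sup>2 + 27 * t / N"
    and balanced: "(real (card (V - S)) - N / 2)\<^sup>2 \<le> N\<^sup>2 / 4 - c\<^sup>2 + 27 * t / N"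
    using max_cut_nearly_complete_bipartite[OF G \<open>V \<noteq> {}\<close> many_edges \<open>0 \<le> c\<close>] min_degree
    unfolding N_def t_def c_def by blast
  define M s where "M = (\<Sum>u\<in>S. real (card ((V - S) - neighbours E u)))"
    and "s = real (card (V - S))"
  have M_le: "M \<le> \<delta> * N\<^sup>2 / 2 + 2 * N" using complete D unfolding M_def by linarith
  have "4 * N \<le> \<delta> * N\<^sup>2"
    using mult_right_mono[OF large_N(1), of N] \<open>0 < N\<close> by (simp add: power2_eq_square mult.assoc)
  then have "(s - N / 2)\<^sup>2 \<le> (sqrt \<delta> * N)\<^sup>2"
    using balanced D \<delta>(1) unfolding s_def by (simp add: power_mult_distrib)
  then have "s - N / 2 \<le> sqrt \<delta> * N"
    by (rule power2_le_imp_le) (use \<open>0 \<le> sqrt \<delta>\<close> \<open>0 < N\<close> in simp)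
  then have s_le: "s \<le> N / 2 + sqrt \<delta> * N" by simp
  obtain x y where edge: "{x, y} \<in> E" and "y \<in> S"
    and fewer_missed: "card ((V - S) - neighbours E x) \<le> card ((V - S) - neighbours E y)"
  proof (cases "card ((V - S) - neighbours E x0) \<le> card ((V - S) - neighbours E y0)")
    case True
    then show thesis using that inner_edge by blast
  next
    case False
    then show thesis using that[of y0 x0] inner_edge by (simp add: insert_commute)
  qed
  note estimates = max_cut_vertex_estimates[OF G S max_cut edge \<open>y \<in> S\<close> fewer_missed, folded M_def s_def t_def]
  have "c \<le> real (degree E y)" using min_degree S \<open>y \<in> S\<close> unfolding c_def N_def by auto
  moreover have "real (max_book V E) \<le> a * N / 2" using few_books unfolding N_def by simp
  ultimately have "(a * (1 - a) - 4 * e) * N\<^sup>2 / 4 < t"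
    using many_triangles_from_max_cut_estimates[OF a e _ \<delta>(2,3) large_N(2) estimates(1) _ estimates(3) _
        s_le estimates(4,5) M_le] estimates(2) \<delta>(1)
    unfolding c_def by simp
  then show False using t_le by simp
qed

theorem theorem5:
  fixes \<alpha>' :: real
  assumes "1/2 < \<alpha>'" and "\<alpha>' < 1"
  shows "\<forall>\<epsilon>'::real. 0 < \<epsilon>' \<and> \<epsilon>' < (1 - \<alpha>') / 3 \<longrightarrow>
    (\<exists>\<delta>::real > 0. \<exists>n0::nat. \<forall>n > n0. \<forall>(V :: nat set) (E :: nat set set).
       simple_graph V E \<and> card V = n \<and>
       card E \<ge> (n^2) div 4 + 1 \<and>
       (\<forall>v\<in>V. real (degree E v) \<ge> (1 - \<delta>) * real n / 2) \<and>
       real (max_book V E) < \<alpha>' * real n / 2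
       \<longrightarrow> real (num_triangles V E) > (\<alpha>' * (1 - \<alpha>') - 4 * \<epsilon>') * real n ^ 2 / 4)"
proof (intro allI impI)
  fix e :: real assume e: "0 < e \<and> e < (1 - \<alpha>') / 3"
  define \<delta> where "\<delta> = ((1 - \<alpha>') * e / 16)\<^sup>2"
  have \<delta>: "0 < \<delta>" "\<delta> \<le> (1 - \<alpha>') * e / 32" "\<delta> + sqrt \<delta> \<le> (1 - \<alpha>') / 4"
    using few_books_delta_bounds[OF assms conjunct1[OF e] conjunct2[OF e]] unfolding \<delta>_def by blast+
  have "0 < (1 - \<alpha>') * e" using assms e by simp
  define n0 where "n0 = nat \<lceil>4 / \<delta> + 64 / ((1 - \<alpha>') * e)\<rceil>"
  have "4 \<le> \<delta> * real n" "64 \<le> (1 - \<alpha>') * e * real n" if "n0 < n" for n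
  proof -
    have "4 / \<delta> \<le> real n" "64 / ((1 - \<alpha>') * e) \<le> real n"
      using that real_nat_ceiling_ge[of "4 / \<delta> + 64 / ((1 - \<alpha>') * e)"] \<delta>(1) \<open>0 < (1 - \<alpha>') * e\<close>
      unfolding n0_def by (smt (verit) divide_pos_pos of_nat_less_iff)+
    then show "4 \<le> \<delta> * real n" "64 \<le> (1 - \<alpha>') * e * real n"
      using \<delta>(1) \<open>0 < (1 - \<alpha>') * e\<close> by (simp_all add: field_simps)
  qed
  then show "\<exists>\<delta>>0. \<exists>n0. \<forall>n>n0. \<forall>(V :: nat set) E. simple_graph V E \<and> card V = n \<and>
      n\<^sup>2 div 4 + 1 \<le> card E \<and> (\<forall>v\<in>V. (1 - \<delta>) * real n / 2 \<le> real (degree E v)) \<and>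
      real (max_book V E) < \<alpha>' * real n / 2
      \<longrightarrow> (\<alpha>' * (1 - \<alpha>') - 4 * e) * real n ^ 2 / 4 < real (num_triangles V E)"
    using many_triangles_if_few_books[OF assms conjunct1[OF e] conjunct2[OF e] \<delta>] \<delta>(1)
    by (intro exI[of _ \<delta>] conjI exI[of _ n0] allI impI) (auto simp: Suc_le_eq)
qed

end
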